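(* Suppose $\frac{p\sqrt[4]{n}}{\ln n}\to\infty$ and $q\ln n\to\infty$ as $n\to\infty$, where $q=1-p$. Then for every $\varepsilon>0$ there exists $n_0$ such that for all $n\ge n_0$, both $u_2(n,p)$ and $u_2'(n,p)$ are at least $$\left(2-\varepsilon+\frac{4\ln p}{\ln(np)}\right)\log_{\frac{1}{1-p}}(np).$$
   Context: $G(n,p)$ is the Erdős–Rényi random graph on $n$ labelled vertices (vertex set $V$), each edge present independently with probability $p=p(n)$; $\mathbb{P}_{n,p}$ is the corresponding probability and $q=1-p$. A diameter graph in $\mathbb{R}^d$ is a graph $(V,E)$ with $V\subset\mathbb{R}^d$ finite and $E=\{\{\mathbf{x},\mathbf{y}\}\subseteq V: |\mathbf{x}-\mathbf{y}|=\operatorname{diam}V\}$, where $\operatorname{diam}V=\max_{\mathbf{x},\mathbf{y}\in V}|\mathbf{x}-\mathbf{y}|$ (Euclidean norm); a graph is a diameter graph in $\mathbb{R}^d$ if it is isomorphic to one. $u_d(n,p)$ is the largest positive integer $k$ such that $\mathbb{P}_{n,p}\big(\exists W\subseteq V,\ |W|=k,\ G[W]$ is a diameter graph in $\mathbb{R}^d$ and $\chi(G[W])=d+1\big)>\frac12$, where $G[W]$ is the induced subgraph; if no such $k$ exists, $u_d(n,p)=0$. $u_d'(n,p)$ is defined identically with the additional requirement that $G[W]$ be connected. *)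

theory Defs
  imports "HOL-Analysis.Analysis"
begin

text \<open>Random graph G(n,p) on vertex set {0..<n}; a graph is given by its edge set,
  a set of 2-element subsets of the vertex set.\<close>

definition all_pairs :: "nat \<Rightarrow> nat set set" where
  "all_pairs n = {e. \<exists>x y. x < n \<and> y < n \<and> x \<noteq> y \<and> e = {x, y}}"

definition prob_gnp :: "nat \<Rightarrow> real \<Rightarrow> (nat set set \<Rightarrow> bool) \<Rightarrow> real" where
  "prob_gnp n p A =
     (\<Sum>E\<in>Pow (all_pairs n).
        if A E then p ^ card E * (1 - p) ^ (card (all_pairs n) - card E) else 0)"

definition is_diameter_graph_R2 :: "nat set \<Rightarrow> nat set set \<Rightarrow> bool" where
  "is_diameter_graph_R2 W E \<longleftrightarrow>
     (\<exists>f :: nat \<Rightarrow> real^2. inj_on f W \<and>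
        (\<forall>x\<in>W. \<forall>y\<in>W. ({x, y} \<in> E \<longleftrightarrow>
            (x \<noteq> y \<and> dist (f x) (f y) = diameter (f ` W)))))"

definition chromatic_number :: "nat set \<Rightarrow> nat set set \<Rightarrow> nat" where
  "chromatic_number W E =
     (LEAST k. \<exists>c :: nat \<Rightarrow> nat. (\<forall>x\<in>W. c x < k) \<and>
        (\<forall>x\<in>W. \<forall>y\<in>W. {x, y} \<in> E \<longrightarrow> c x \<noteq> c y))"

definition connected_induced :: "nat set \<Rightarrow> nat set set \<Rightarrow> bool" where
  "connected_induced W E \<longleftrightarrow>
     (\<forall>x\<in>W. \<forall>y\<in>W. (\<lambda>a b. a \<in> W \<and> b \<in> W \<and> {a, b} \<in> E)\<^sup>*\<^sup>* x y)"

definition u2 :: "nat \<Rightarrow> real \<Rightarrow> nat" where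
  "u2 n p = Max ({k. 0 < k \<and> prob_gnp n p (\<lambda>E. \<exists>W \<subseteq> {..<n}. card W = k \<and>
        is_diameter_graph_R2 W E \<and> chromatic_number W E = 3) > 1/2} \<union> {0})"

definition u2' :: "nat \<Rightarrow> real \<Rightarrow> nat" where
  "u2' n p = Max ({k. 0 < k \<and> prob_gnp n p (\<lambda>E. \<exists>W \<subseteq> {..<n}. card W = k \<and>
        is_diameter_graph_R2 W E \<and> chromatic_number W E = 3 \<and>
        connected_induced W E) > 1/2} \<union> {0})"

end

theory Submission
  imports Defs
begin

text \<open>The fan on k vertices (a centre joined to all other vertices, two of which are also
  adjacent to each other) is a connected diameter graph in the plane with chromatic number 3:
  put the centre at the origin and the other vertices on an arc of the unit circle of angle
  pi/3 whose endpoints are the two adjacent ones. So it suffices to show that G(n,p) contains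
  an induced fan on k vertices with probability above 1/2 when k is the ceiling of the bound.
  This is the second moment method for the number X of embeddings of the fan: two copies
  sharing l vertices share at most l edges and (l choose 2) pairs, which gives
  E[X^2] \<le> (1 + \<delta>) E[X]^2 with
  \<delta> = \<Sum>_l (k choose l) (k/(n-k))^l / (p^l (1-p)^(l choose 2)),
  and the growth conditions on p make \<delta> < 1 for the chosen k and large n.\<close>

section \<open>A planar realisation of the fan\<close>

lemma norm_vec2_sq: "(norm (v :: real^2))\<^sup>2 = (v$1)\<^sup>2 + (v$2)\<^sup>2"
  unfolding power2_norm_eq_inner inner_vec_def sum_2 by (simp add: power2_eq_square)

definition unit_vec :: "real \<Rightarrow> real^2" where
  "unit_vec t = vector [cos t, sin t]"

lemma dist_unit_vec_sq: "(dist (unit_vec a) (unit_vec b))\<^sup>2 = 2 - 2 * cos (a - b)"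
proof -
  have "(dist (unit_vec a) (unit_vec b))\<^sup>2 = (cos a - cos b)\<^sup>2 + (sin a - sin b)\<^sup>2"
    unfolding dist_norm norm_vec2_sq by (simp add: unit_vec_def)
  also have "\<dots> = 2 - 2 * cos (a - b)"
    by (simp add: cos_diff power2_eq_square algebra_simps)
  finally show ?thesis .
qed

lemma norm_unit_vec [simp]: "norm (unit_vec t) = 1"
proof -
  have "(norm (unit_vec t))\<^sup>2 = 1"
    unfolding norm_vec2_sq by (simp add: unit_vec_def)
  then show ?thesis using norm_ge_zero[of "unit_vec t"] by (auto simp: power2_eq_1_iff)
qed

lemma dist_unit_vec_eq_1:
  assumes "\<bar>a - b\<bar> = pi / 3"
  shows "dist (unit_vec a) (unit_vec b) = 1"
proof -
  have "cos (a - b) = cos \<bar>a - b\<bar>" by simp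
  also have "\<dots> = 1 / 2" by (simp only: assms cos_60)
  finally have "cos (a - b) = 1 / 2" .
  then have "(dist (unit_vec a) (unit_vec b))\<^sup>2 = 1" by (simp add: dist_unit_vec_sq)
  then show ?thesis using zero_le_dist[of "unit_vec a" "unit_vec b"] by (auto simp: power2_eq_1_iff)
qed

lemma dist_unit_vec_less_1:
  assumes "\<bar>a - b\<bar> < pi / 3"
  shows "dist (unit_vec a) (unit_vec b) < 1"
proof -
  have "cos (pi / 3) < cos \<bar>a - b\<bar>"
    using assms by (intro cos_monotone_0_pi) auto
  then have "(dist (unit_vec a) (unit_vec b))\<^sup>2 < 1" by (simp add: dist_unit_vec_sq cos_60)
  then show ?thesis by (simp add: power_less_one_iff)
qed

lemma unit_vec_neq:
  assumes "0 < \<bar>a - b\<bar>" "\<bar>a - b\<bar> \<le> pi"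
  shows "unit_vec a \<noteq> unit_vec b"
proof
  assume "unit_vec a = unit_vec b"
  then have "cos \<bar>a - b\<bar> = cos 0" using dist_unit_vec_sq[of a b] by simp
  moreover have "cos \<bar>a - b\<bar> < cos 0" using assms by (intro cos_monotone_0_pi) auto
  ultimately show False by simp
qed

text \<open>Vertex 0 is the centre, at the origin; vertices 1 and 2 lie at angles 0 and pi/3 on the
  unit circle and all others strictly between them, so the unit distances, which are the
  diameters, are exactly the fan edges.\<close>

definition fan_angle :: "nat \<Rightarrow> real" where
  "fan_angle i = (if i = 1 then 0 else pi / (3 * (real i - 1)))"

definition fan_point :: "nat \<Rightarrow> real^2" where
  "fan_point i = (if i = 0 then 0 else unit_vec (fan_angle i))"

definition fan_edge :: "nat \<Rightarrow> nat \<Rightarrow> bool" where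
  "fan_edge i j \<longleftrightarrow> i \<noteq> j \<and> (i = 0 \<or> j = 0 \<or> {i, j} = {1, 2})"

lemma fan_angle_bounds:
  assumes "1 \<le> i"
  shows "0 \<le> fan_angle i" "fan_angle i \<le> pi / 3"
  using assms pi_gt_zero by (auto simp: fan_angle_def field_simps)

lemma fan_angle_eq_0_iff: "1 \<le> i \<Longrightarrow> fan_angle i = 0 \<longleftrightarrow> i = 1"
  using pi_gt_zero by (auto simp: fan_angle_def)

lemma fan_angle_eq_pi_third_iff: "fan_angle i = pi / 3 \<longleftrightarrow> i = 2"
  using pi_gt_zero by (auto simp: fan_angle_def field_simps)

lemma inj_on_fan_angle: "inj_on fan_angle {1..}"
  using pi_gt_zero by (auto simp: inj_on_def fan_angle_def field_simps)

lemma fan_angle_diff: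
  assumes "1 \<le> i" "1 \<le> j" "i \<noteq> j"
  shows "0 < \<bar>fan_angle i - fan_angle j\<bar>" "\<bar>fan_angle i - fan_angle j\<bar> \<le> pi / 3"
    "\<bar>fan_angle i - fan_angle j\<bar> = pi / 3 \<longleftrightarrow> {i, j} = {1, 2}"
proof -
  have "fan_angle i \<noteq> fan_angle j" using assms inj_on_fan_angle by (auto dest: inj_onD)
  then show "0 < \<bar>fan_angle i - fan_angle j\<bar>" by simp
  show "\<bar>fan_angle i - fan_angle j\<bar> \<le> pi / 3"
    using fan_angle_bounds[OF assms(1)] fan_angle_bounds[OF assms(2)] by linarith
  have "\<bar>fan_angle i - fan_angle j\<bar> = pi / 3 \<longleftrightarrow>
      {fan_angle i, fan_angle j} = {0, pi / 3}"
    using fan_angle_bounds[OF assms(1)] fan_angle_bounds[OF assms(2)] pi_gt_zero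
    by (auto simp: doubleton_eq_iff abs_if)
  also have "\<dots> \<longleftrightarrow> {i, j} = {1, 2}"
    using assms fan_angle_eq_0_iff fan_angle_eq_pi_third_iff pi_gt_zero
    by (auto simp: doubleton_eq_iff)
  finally show "\<bar>fan_angle i - fan_angle j\<bar> = pi / 3 \<longleftrightarrow> {i, j} = {1, 2}" .
qed

lemma fan_point_dist:
  assumes "i \<noteq> j"
  shows "dist (fan_point i) (fan_point j) \<le> 1"
    and "dist (fan_point i) (fan_point j) = 1 \<longleftrightarrow> fan_edge i j"
    and "fan_point i \<noteq> fan_point j"
proof -
  have "dist (fan_point i) (fan_point j) \<le> 1 \<and>
      (dist (fan_point i) (fan_point j) = 1 \<longleftrightarrow> fan_edge i j) \<and> fan_point i \<noteq> fan_point j"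
  proof (cases "i = 0 \<or> j = 0")
    case True
    then show ?thesis using assms
      by (auto simp: fan_point_def fan_edge_def dist_norm norm_minus_commute dest: arg_cong[of _ _ norm])
  next
    case False
    then have ij: "1 \<le> i" "1 \<le> j" by auto
    note d = fan_angle_diff[OF ij assms]
    have "unit_vec (fan_angle i) \<noteq> unit_vec (fan_angle j)"
      using d(1,2) pi_gt_zero by (intro unit_vec_neq) linarith+
    then show ?thesis
    proof (cases "{i, j} = {1, 2}")
      case True
      then show ?thesis using d \<open>unit_vec _ \<noteq> _\<close> False dist_unit_vec_eq_1
        by (auto simp: fan_point_def fan_edge_def)
    next
      case other: False
      then have "\<bar>fan_angle i - fan_angle j\<bar> < pi / 3" using d by linarith
      then have "dist (unit_vec (fan_angle i)) (unit_vec (fan_angle j)) < 1"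
        by (rule dist_unit_vec_less_1)
      then show ?thesis using \<open>unit_vec _ \<noteq> _\<close> False other
        by (auto simp: fan_point_def fan_edge_def)
    qed
  qed
  then show "dist (fan_point i) (fan_point j) \<le> 1"
    "dist (fan_point i) (fan_point j) = 1 \<longleftrightarrow> fan_edge i j" "fan_point i \<noteq> fan_point j"
    by auto
qed

lemma dist_fan_point_le: "dist (fan_point i) (fan_point j) \<le> 1"
  using fan_point_dist(1) by (cases "i = j") auto

section \<open>Copies of the fan are 3-chromatic connected diameter graphs\<close>

lemma is_diameter_graph_R2I:
  fixes f :: "nat \<Rightarrow> real^2"
  assumes "finite W" "inj_on f W"
    and le: "\<And>x y. x \<in> W \<Longrightarrow> y \<in> W \<Longrightarrow> dist (f x) (f y) \<le> 1"
    and edge: "\<And>x y. x \<in> W \<Longrightarrow> y \<in> W \<Longrightarrow> {x, y} \<in> E \<longleftrightarrow> x \<noteq> y \<and> dist (f x) (f y) = 1"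
    and "a \<in> W" "b \<in> W" "{a, b} \<in> E"
  shows "is_diameter_graph_R2 W E"
proof -
  have "diameter (f ` W) \<le> 1" using le by (intro diameter_le) (auto simp: dist_norm[symmetric])
  moreover have "dist (f a) (f b) \<le> diameter (f ` W)"
    using assms by (intro diameter_bounded_bound finite_imp_bounded) auto
  ultimately have "diameter (f ` W) = 1" using edge assms(5-7) by auto
  then show ?thesis unfolding is_diameter_graph_R2_def using assms(2) edge by auto
qed

lemma chromatic_number_eq_3:
  fixes c :: "nat \<Rightarrow> nat"
  assumes "\<forall>x\<in>W. c x < 3" "\<forall>x\<in>W. \<forall>y\<in>W. {x, y} \<in> E \<longrightarrow> c x \<noteq> c y"
    and "a \<in> W" "b \<in> W" "d \<in> W" "{a, b} \<in> E" "{a, d} \<in> E" "{b, d} \<in> E"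
  shows "chromatic_number W E = 3"
  unfolding chromatic_number_def
proof (rule Least_equality)
  show "\<exists>c :: nat \<Rightarrow> nat. (\<forall>x\<in>W. c x < 3) \<and> (\<forall>x\<in>W. \<forall>y\<in>W. {x, y} \<in> E \<longrightarrow> c x \<noteq> c y)"
    using assms(1,2) by blast
next
  fix m assume "\<exists>c :: nat \<Rightarrow> nat. (\<forall>x\<in>W. c x < m) \<and> (\<forall>x\<in>W. \<forall>y\<in>W. {x, y} \<in> E \<longrightarrow> c x \<noteq> c y)"
  then obtain c' :: "nat \<Rightarrow> nat" where "\<forall>x\<in>W. c' x < m" "\<forall>x\<in>W. \<forall>y\<in>W. {x, y} \<in> E \<longrightarrow> c' x \<noteq> c' y"
    by blast
  then have "c' a \<noteq> c' b" "c' a \<noteq> c' d" "c' b \<noteq> c' d" "c' a < m" "c' b < m" "c' d < m"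
    using assms(3-8) by blast+
  then show "3 \<le> m" by linarith
qed

lemma connected_induced_if_universal_vertex:
  assumes z: "z \<in> W" and adj: "\<And>x. x \<in> W \<Longrightarrow> x \<noteq> z \<Longrightarrow> {x, z} \<in> E"
  shows "connected_induced W E"
proof -
  let ?R = "\<lambda>a b. a \<in> W \<and> b \<in> W \<and> {a, b} \<in> E"
  have step: "?R x z \<and> ?R z x" if "x \<in> W" "x \<noteq> z" for x
    using adj[OF that] that z by (simp add: insert_commute)
  have to_z: "?R\<^sup>*\<^sup>* x z" if "x \<in> W" for x
    using step[OF that] by (cases "x = z") (simp_all add: r_into_rtranclp)
  have from_z: "?R\<^sup>*\<^sup>* z x" if "x \<in> W" for x
    using step[OF that] by (cases "x = z") (simp_all add: r_into_rtranclp)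
  show ?thesis
    unfolding connected_induced_def using rtranclp_trans[OF to_z from_z] by blast
qed

definition fan_copy :: "nat \<Rightarrow> (nat \<Rightarrow> nat) \<Rightarrow> nat set set \<Rightarrow> bool" where
  "fan_copy k \<phi> E \<longleftrightarrow> inj_on \<phi> {..<k} \<and> (\<forall>i<k. \<forall>j<k. {\<phi> i, \<phi> j} \<in> E \<longleftrightarrow> fan_edge i j)"

context
  fixes k :: nat and \<phi> :: "nat \<Rightarrow> nat" and E :: "nat set set"
  assumes k: "3 \<le> k" and copy: "fan_copy k \<phi> E"
begin

private lemma fan_copy_edge: "i < k \<Longrightarrow> j < k \<Longrightarrow> {\<phi> i, \<phi> j} \<in> E \<longleftrightarrow> fan_edge i j"
  using copy unfolding fan_copy_def by blast

private lemma fan_copy_inj: "inj_on \<phi> {..<k}"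
  using copy unfolding fan_copy_def by blast

lemma diameter_graph_fan_copy: "is_diameter_graph_R2 (\<phi> ` {..<k}) E"
proof -
  define f where "f = fan_point \<circ> inv_into {..<k} \<phi>"
  have f: "f (\<phi> i) = fan_point i" if "i < k" for i
    using that fan_copy_inj by (simp add: f_def)
  show ?thesis
  proof (rule is_diameter_graph_R2I[where f = f])
    show "inj_on f (\<phi> ` {..<k})"
      using fan_point_dist(3) by (auto simp: inj_on_def f) metis
    show "dist (f x) (f y) \<le> 1" if "x \<in> \<phi> ` {..<k}" "y \<in> \<phi> ` {..<k}" for x y
      by (simp add: f_def dist_fan_point_le)
    show "{x, y} \<in> E \<longleftrightarrow> x \<noteq> y \<and> dist (f x) (f y) = 1"
      if xy: "x \<in> \<phi> ` {..<k}" "y \<in> \<phi> ` {..<k}" for x y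
    proof -
      obtain i j where ij: "i < k" "j < k" "x = \<phi> i" "y = \<phi> j" using xy by auto
      have "x = y \<longleftrightarrow> i = j" using ij fan_copy_inj by (auto dest: inj_onD)
      moreover have "{x, y} \<in> E \<longleftrightarrow> fan_edge i j" using ij fan_copy_edge by simp
      moreover have "dist (f x) (f y) = dist (fan_point i) (fan_point j)" using ij f by simp
      ultimately show ?thesis using fan_point_dist(2)[of i j] by (auto simp: fan_edge_def)
    qed
    show "{\<phi> 0, \<phi> 1} \<in> E" using k by (simp add: fan_copy_edge fan_edge_def)
  qed (use k in auto)
qed

lemma chromatic_number_fan_copy: "chromatic_number (\<phi> ` {..<k}) E = 3"
proof -
  define col :: "nat \<Rightarrow> nat" where "col i = (if i = 0 then 0 else if i = 2 then 2 else 1)" for i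
  let ?c = "col \<circ> inv_into {..<k} \<phi>"
  show ?thesis
  proof (rule chromatic_number_eq_3[where c = ?c])
    show "\<forall>x\<in>\<phi> ` {..<k}. ?c x < 3" by (auto simp: col_def)
    show "\<forall>x\<in>\<phi> ` {..<k}. \<forall>y\<in>\<phi> ` {..<k}. {x, y} \<in> E \<longrightarrow> ?c x \<noteq> ?c y"
    proof (intro ballI impI)
      fix x y assume "x \<in> \<phi> ` {..<k}" "y \<in> \<phi> ` {..<k}" "{x, y} \<in> E"
      then obtain i j where ij: "i < k" "j < k" "x = \<phi> i" "y = \<phi> j" by auto
      then have "fan_edge i j" using fan_copy_edge \<open>{x, y} \<in> E\<close> by simp
      have "?c x = col i" "?c y = col j" using ij fan_copy_inj by simp_all
      moreover have "col i \<noteq> col j"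
        using \<open>fan_edge i j\<close> by (auto simp: col_def fan_edge_def doubleton_eq_iff)
      ultimately show "?c x \<noteq> ?c y" by simp
    qed
    show "{\<phi> 0, \<phi> 1} \<in> E" "{\<phi> 0, \<phi> 2} \<in> E" "{\<phi> 1, \<phi> 2} \<in> E"
      using k by (simp_all add: fan_copy_edge fan_edge_def)
  qed (use k in simp_all)
qed

lemma connected_fan_copy: "connected_induced (\<phi> ` {..<k}) E"
proof (rule connected_induced_if_universal_vertex)
  show "\<phi> 0 \<in> \<phi> ` {..<k}" using k by simp
  fix x assume "x \<in> \<phi> ` {..<k}" "x \<noteq> \<phi> 0"
  then obtain i where "i < k" "i \<noteq> 0" "x = \<phi> i" by auto
  then show "{x, \<phi> 0} \<in> E" using k fan_copy_edge[of i 0] by (simp add: fan_edge_def)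
qed

end

section \<open>Edge events in G(n,p)\<close>

lemma finite_all_pairs: "finite (all_pairs n)"
  by (rule finite_subset[of _ "Pow {..<n}"]) (auto simp: all_pairs_def)

lemma sum_Pow_power_card:
  fixes p q :: "'a :: comm_semiring_1"
  assumes "finite A"
  shows "(\<Sum>B\<in>Pow A. p ^ card B * q ^ card (A - B)) = (p + q) ^ card A"
  using prod_add[OF assms, of "\<lambda>_. p" "\<lambda>_. q"] by simp

lemma prob_gnp_impossible: "(\<And>E. \<not> B E) \<Longrightarrow> prob_gnp n p B = 0"
  unfolding prob_gnp_def by simp

lemma prob_gnp_mono:
  assumes "0 \<le> p" "p \<le> 1" "\<And>E. E \<subseteq> all_pairs n \<Longrightarrow> B1 E \<Longrightarrow> B2 E"
  shows "prob_gnp n p B1 \<le> prob_gnp n p B2"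
  unfolding prob_gnp_def using assms by (intro sum_mono) auto

lemma prob_gnp_inter_eq:
  assumes S: "S \<subseteq> all_pairs n" and A: "A \<subseteq> S"
  shows "prob_gnp n p (\<lambda>E. E \<inter> S = A) = p ^ card A * (1 - p) ^ card (S - A)"
proof -
  let ?U = "all_pairs n"
  have finU: "finite ?U" by (rule finite_all_pairs)
  have finS: "finite S" and finA: "finite A"
    using finU S A by (auto intro: finite_subset)
  have events: "{E \<in> Pow ?U. E \<inter> S = A} = (\<lambda>B. A \<union> B) ` Pow (?U - S)"
  proof
    show "{E \<in> Pow ?U. E \<inter> S = A} \<subseteq> (\<lambda>B. A \<union> B) ` Pow (?U - S)"
    proof
      fix E assume "E \<in> {E \<in> Pow ?U. E \<inter> S = A}"
      then have "E = A \<union> (E - S)" "E - S \<in> Pow (?U - S)" by auto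
      then show "E \<in> (\<lambda>B. A \<union> B) ` Pow (?U - S)" by blast
    qed
    show "(\<lambda>B. A \<union> B) ` Pow (?U - S) \<subseteq> {E \<in> Pow ?U. E \<inter> S = A}" using A S by auto
  qed
  have inj: "inj_on (\<lambda>B. A \<union> B) (Pow (?U - S))"
    using A by (auto simp: inj_on_def)
  have card_complement: "card ?U - card (A \<union> B) = card (S - A) + card (?U - S - B)"
    if "B \<subseteq> ?U - S" for B
  proof -
    have "finite B" using that finU by (auto intro: finite_subset)
    moreover have "A \<inter> B = {}" using that A by auto
    ultimately have "card (A \<union> B) = card A + card B" using finA by (simp add: card_Un_disjoint)
    moreover have "card ?U = card S + card (?U - S)"
      using S finS by (simp add: card_Diff_subset card_mono finU)
    moreover have "card S = card A + card (S - A)"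
      using A finA by (simp add: card_Diff_subset card_mono finS)
    moreover have "card (?U - S) = card B + card (?U - S - B)"
      using that \<open>finite B\<close> by (simp add: card_Diff_subset card_mono finU)
    ultimately show ?thesis by linarith
  qed
  have "prob_gnp n p (\<lambda>E. E \<inter> S = A)
      = (\<Sum>E\<in>{E \<in> Pow ?U. E \<inter> S = A}. p ^ card E * (1 - p) ^ (card ?U - card E))"
    unfolding prob_gnp_def by (rule sum.inter_filter[symmetric]) (simp add: finU)
  also have "\<dots> = (\<Sum>B\<in>Pow (?U - S). p ^ card (A \<union> B) * (1 - p) ^ (card ?U - card (A \<union> B)))"
    unfolding events by (simp add: sum.reindex[OF inj])
  also have "\<dots> = (\<Sum>B\<in>Pow (?U - S).
      (p ^ card A * (1 - p) ^ card (S - A)) * (p ^ card B * (1 - p) ^ card (?U - S - B)))"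
  proof (rule sum.cong[OF refl])
    fix B assume B: "B \<in> Pow (?U - S)"
    then have "card (A \<union> B) = card A + card B"
      using A finA finU by (subst card_Un_disjoint) (auto intro: finite_subset)
    moreover have "card ?U - card (A \<union> B) = card (S - A) + card (?U - S - B)"
      using B card_complement by blast
    ultimately show "p ^ card (A \<union> B) * (1 - p) ^ (card ?U - card (A \<union> B))
        = (p ^ card A * (1 - p) ^ card (S - A)) * (p ^ card B * (1 - p) ^ card (?U - S - B))"
      by (simp only: power_add mult_ac)
  qed
  also have "\<dots> = p ^ card A * (1 - p) ^ card (S - A)"
    using sum_Pow_power_card[of "?U - S" p "1 - p"] finU by (simp add: sum_distrib_left[symmetric])
  finally show ?thesis .
qed

text \<open>Inclusion--exclusion for the edges and non-edges prescribed twice, multiplied out so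
  that no cardinalities are subtracted.\<close>

lemma prob_gnp_inter_eq_both:
  assumes S: "S1 \<subseteq> all_pairs n" "S2 \<subseteq> all_pairs n" and A: "A1 \<subseteq> S1" "A2 \<subseteq> S2"
    and consistent: "A1 \<inter> S2 = A2 \<inter> S1"
  shows "prob_gnp n p (\<lambda>E. E \<inter> S1 = A1 \<and> E \<inter> S2 = A2)
      * (p ^ card (A1 \<inter> A2) * (1 - p) ^ card ((S1 - A1) \<inter> (S2 - A2)))
    = (p ^ card A1 * (1 - p) ^ card (S1 - A1)) * (p ^ card A2 * (1 - p) ^ card (S2 - A2))"
proof -
  have "finite S1" "finite S2" using S by (simp_all add: finite_subset[OF _ finite_all_pairs])
  then have fin: "finite A1" "finite A2" "finite (S1 - A1)" "finite (S2 - A2)"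
    using A by (simp_all add: finite_subset)
  have "(\<lambda>E. E \<inter> S1 = A1 \<and> E \<inter> S2 = A2) = (\<lambda>E. E \<inter> (S1 \<union> S2) = A1 \<union> A2)"
  proof (intro ext iffI)
    fix E assume "E \<inter> (S1 \<union> S2) = A1 \<union> A2"
    then have "E \<inter> S1 = (A1 \<union> A2) \<inter> S1" "E \<inter> S2 = (A1 \<union> A2) \<inter> S2" by blast+
    then show "E \<inter> S1 = A1 \<and> E \<inter> S2 = A2" using A consistent by blast
  qed auto
  then have "prob_gnp n p (\<lambda>E. E \<inter> S1 = A1 \<and> E \<inter> S2 = A2)
      = p ^ card (A1 \<union> A2) * (1 - p) ^ card ((S1 \<union> S2) - (A1 \<union> A2))"
    using S A by (simp only: prob_gnp_inter_eq Un_mono Un_least)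
  also have "(S1 \<union> S2) - (A1 \<union> A2) = (S1 - A1) \<union> (S2 - A2)"
    using A consistent by blast
  finally have "prob_gnp n p (\<lambda>E. E \<inter> S1 = A1 \<and> E \<inter> S2 = A2)
      = p ^ card (A1 \<union> A2) * (1 - p) ^ card ((S1 - A1) \<union> (S2 - A2))" .
  then have "prob_gnp n p (\<lambda>E. E \<inter> S1 = A1 \<and> E \<inter> S2 = A2)
      * (p ^ card (A1 \<inter> A2) * (1 - p) ^ card ((S1 - A1) \<inter> (S2 - A2)))
    = p ^ (card (A1 \<union> A2) + card (A1 \<inter> A2))
      * (1 - p) ^ (card ((S1 - A1) \<union> (S2 - A2)) + card ((S1 - A1) \<inter> (S2 - A2)))"
    by (simp only: power_add mult_ac)
  also have "\<dots> = p ^ (card A1 + card A2) * (1 - p) ^ (card (S1 - A1) + card (S2 - A2))"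
    by (simp only: card_Un_Int[OF fin(1,2)] card_Un_Int[OF fin(3,4)])
  finally show ?thesis by (simp only: power_add mult_ac)
qed

section \<open>Induced copies of the fan in G(n,p)\<close>

definition fan_edges :: "nat \<Rightarrow> nat set set" where
  "fan_edges k = {{i, j} | i j. i < k \<and> j < k \<and> fan_edge i j}"

definition embeddings :: "nat \<Rightarrow> nat \<Rightarrow> (nat \<Rightarrow> nat) set" where
  "embeddings n k = {\<phi> \<in> {..<k} \<rightarrow>\<^sub>E {..<n}. inj_on \<phi> {..<k}}"

definition copy_pairs :: "nat \<Rightarrow> (nat \<Rightarrow> nat) \<Rightarrow> nat set set" where
  "copy_pairs k \<phi> = image \<phi> ` all_pairs k"

definition copy_edges :: "nat \<Rightarrow> (nat \<Rightarrow> nat) \<Rightarrow> nat set set" where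
  "copy_edges k \<phi> = image \<phi> ` fan_edges k"

definition induces_fan :: "nat \<Rightarrow> (nat \<Rightarrow> nat) \<Rightarrow> nat set set \<Rightarrow> bool" where
  "induces_fan k \<phi> E \<longleftrightarrow> E \<inter> copy_pairs k \<phi> = copy_edges k \<phi>"

definition fan_density :: "nat \<Rightarrow> real \<Rightarrow> real" where
  "fan_density k p = p ^ card (fan_edges k) * (1 - p) ^ card (all_pairs k - fan_edges k)"

lemma fan_edge_sym: "fan_edge i j \<longleftrightarrow> fan_edge j i"
  by (auto simp: fan_edge_def insert_commute)

lemma doubleton_mem_fan_edges: "{i, j} \<in> fan_edges k \<longleftrightarrow> i < k \<and> j < k \<and> fan_edge i j"
  unfolding fan_edges_def using fan_edge_sym by (auto simp: doubleton_eq_iff)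

lemma all_pairs_subset_Pow: "all_pairs k \<subseteq> Pow {..<k}"
  unfolding all_pairs_def by auto

lemma fan_edges_subset_all_pairs: "fan_edges k \<subseteq> all_pairs k"
  unfolding fan_edges_def all_pairs_def fan_edge_def by auto

lemma fan_edges_subset_Pow: "fan_edges k \<subseteq> Pow {..<k}"
  using fan_edges_subset_all_pairs all_pairs_subset_Pow by (rule subset_trans)

lemma card_embeddings: "card (embeddings n k) = (\<Prod>i<k. n - i)"
  using card_inj_on_subset_funcset[of "{..<k}" "{..<n}" "{..<k}"]
  by (simp add: embeddings_def atLeast0LessThan)

context
  fixes n k :: nat and \<phi> :: "nat \<Rightarrow> nat"
  assumes \<phi>: "\<phi> \<in> embeddings n k"
begin

lemma embedding_inj: "inj_on \<phi> {..<k}"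
  using \<phi> unfolding embeddings_def by auto

lemma embedding_range: "i < k \<Longrightarrow> \<phi> i < n"
  using \<phi> unfolding embeddings_def by auto

lemma inj_on_image_embedding: "inj_on (image \<phi>) (Pow {..<k})"
  by (rule inj_on_image_Pow[OF embedding_inj])

lemma copy_pairs_subset: "copy_pairs k \<phi> \<subseteq> all_pairs n"
  unfolding copy_pairs_def all_pairs_def
  using embedding_inj embedding_range by (auto dest: inj_onD)

lemma copy_edges_subset: "copy_edges k \<phi> \<subseteq> copy_pairs k \<phi>"
  unfolding copy_edges_def copy_pairs_def using fan_edges_subset_all_pairs by (rule image_mono)

lemma card_copy_edges: "card (copy_edges k \<phi>) = card (fan_edges k)"
  unfolding copy_edges_def
  by (intro card_image inj_on_subset[OF inj_on_image_embedding fan_edges_subset_Pow])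

lemma card_copy_non_edges:
  "card (copy_pairs k \<phi> - copy_edges k \<phi>) = card (all_pairs k - fan_edges k)"
proof -
  have "copy_pairs k \<phi> - copy_edges k \<phi> = image \<phi> ` (all_pairs k - fan_edges k)"
    unfolding copy_pairs_def copy_edges_def
    using all_pairs_subset_Pow[of k] fan_edges_subset_Pow[of k]
    by (intro inj_on_image_set_diff[OF inj_on_image_embedding, symmetric]) auto
  moreover have "inj_on (image \<phi>) (all_pairs k - fan_edges k)"
    using all_pairs_subset_Pow[of k] by (intro inj_on_subset[OF inj_on_image_embedding]) auto
  ultimately show ?thesis by (simp add: card_image)
qed

lemma prob_induces_fan: "prob_gnp n p (induces_fan k \<phi>) = fan_density k p"
  unfolding induces_fan_def fan_density_def
  using prob_gnp_inter_eq[OF copy_pairs_subset copy_edges_subset]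
  by (simp add: card_copy_edges card_copy_non_edges)

lemma doubleton_mem_copy_edges:
  assumes "i < k" "j < k"
  shows "{\<phi> i, \<phi> j} \<in> copy_edges k \<phi> \<longleftrightarrow> fan_edge i j"
proof -
  have "{\<phi> i, \<phi> j} \<in> copy_edges k \<phi> \<longleftrightarrow> {i, j} \<in> fan_edges k"
    unfolding copy_edges_def
    using assms inj_on_image_mem_iff[OF inj_on_image_embedding _ fan_edges_subset_Pow, of "{i, j}"]
    by auto
  then show ?thesis using assms by (simp add: doubleton_mem_fan_edges)
qed

lemma induces_fan_imp_fan_copy:
  assumes "induces_fan k \<phi> E" "E \<subseteq> all_pairs n"
  shows "fan_copy k \<phi> E"
  unfolding fan_copy_def
proof (intro conjI embedding_inj allI impI)
  fix i j assume ij: "i < k" "j < k"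
  show "{\<phi> i, \<phi> j} \<in> E \<longleftrightarrow> fan_edge i j"
  proof (cases "i = j")
    case True
    then have "{\<phi> i, \<phi> j} \<notin> all_pairs n" by (auto simp: all_pairs_def doubleton_eq_iff)
    then show ?thesis using True assms(2) by (auto simp: fan_edge_def)
  next
    case False
    then have "{i, j} \<in> all_pairs k" using ij unfolding all_pairs_def by auto
    then have "{\<phi> i, \<phi> j} \<in> copy_pairs k \<phi>"
      unfolding copy_pairs_def by (metis image_empty image_eqI image_insert)
    then have "{\<phi> i, \<phi> j} \<in> E \<longleftrightarrow> {\<phi> i, \<phi> j} \<in> copy_edges k \<phi>"
      using assms(1) unfolding induces_fan_def by blast
    then show ?thesis using doubleton_mem_copy_edges[OF ij] by simp
  qed
qed

end

text \<open>Each fan edge inside T is charged to a vertex of T: the edge from the centre 0 to j is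
  charged to j, and the edge {1, 2} to the centre, or to vertex 1 when the centre lies outside T.\<close>

lemma card_fan_edges_within:
  assumes "finite T"
  shows "card {e \<in> fan_edges k. e \<subseteq> T} \<le> card T"
proof -
  define charge where "charge j = (if j = 0 \<or> 0 \<notin> T then {1, 2} else {0, j})" for j :: nat
  have "{e \<in> fan_edges k. e \<subseteq> T} \<subseteq> charge ` T"
  proof
    fix e assume "e \<in> {e \<in> fan_edges k. e \<subseteq> T}"
    then obtain i j where e: "e = {i, j}" "fan_edge i j" "{i, j} \<subseteq> T"
      unfolding fan_edges_def by auto
    consider "i = 0" | "j = 0" | "{i, j} = {1, 2}" using e(2) unfolding fan_edge_def by blast
    then show "e \<in> charge ` T"
    proof cases
      case 1
      then show ?thesis using e by (auto simp: charge_def fan_edge_def image_iff intro!: bexI[of _ j])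
    next
      case 2
      then show ?thesis using e by (auto simp: charge_def fan_edge_def image_iff intro!: bexI[of _ i])
    next
      case 3
      then have "e = {1, 2}" "1 \<in> T" using e by auto
      then show ?thesis
        by (cases "0 \<in> T") (auto simp: charge_def image_iff intro: bexI[of _ 0] bexI[of _ 1])
    qed
  qed
  then have "card {e \<in> fan_edges k. e \<subseteq> T} \<le> card (charge ` T)"
    using assms by (intro card_mono) auto
  also have "\<dots> \<le> card T" by (rule card_image_le[OF assms])
  finally show ?thesis .
qed

context
  fixes n k :: nat and \<phi>1 \<phi>2 :: "nat \<Rightarrow> nat"
  assumes \<phi>1: "\<phi>1 \<in> embeddings n k" and \<phi>2: "\<phi>2 \<in> embeddings n k"
begin

lemma copy_pairs_subset_image: "e \<in> copy_pairs k \<phi> \<Longrightarrow> e \<subseteq> \<phi> ` {..<k}"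
  unfolding copy_pairs_def all_pairs_def by auto

lemma card_copy_pairs_overlap:
  "card (copy_pairs k \<phi>1 \<inter> copy_pairs k \<phi>2) \<le> card (\<phi>1 ` {..<k} \<inter> \<phi>2 ` {..<k}) choose 2"
proof -
  let ?O = "\<phi>1 ` {..<k} \<inter> \<phi>2 ` {..<k}"
  have "copy_pairs k \<phi>1 \<inter> copy_pairs k \<phi>2 \<subseteq> {B. B \<subseteq> ?O \<and> card B = 2}"
  proof
    fix e assume e: "e \<in> copy_pairs k \<phi>1 \<inter> copy_pairs k \<phi>2"
    then have "e \<in> all_pairs n" using copy_pairs_subset[OF \<phi>1] by blast
    then have "card e = 2" unfolding all_pairs_def by auto
    then show "e \<in> {B. B \<subseteq> ?O \<and> card B = 2}"
      using e copy_pairs_subset_image[of _ \<phi>1] copy_pairs_subset_image[of _ \<phi>2] by blast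
  qed
  then have "card (copy_pairs k \<phi>1 \<inter> copy_pairs k \<phi>2) \<le> card {B. B \<subseteq> ?O \<and> card B = 2}"
    by (intro card_mono) auto
  also have "\<dots> = card ?O choose 2" by (rule n_subsets) simp
  finally show ?thesis .
qed

lemma card_copy_edges_overlap:
  "card (copy_edges k \<phi>1 \<inter> copy_edges k \<phi>2) \<le> card (\<phi>1 ` {..<k} \<inter> \<phi>2 ` {..<k})"
proof -
  let ?O = "\<phi>1 ` {..<k} \<inter> \<phi>2 ` {..<k}"
  define T where "T = {i \<in> {..<k}. \<phi>2 i \<in> ?O}"
  have "copy_edges k \<phi>1 \<inter> copy_edges k \<phi>2 \<subseteq> image \<phi>2 ` {e \<in> fan_edges k. e \<subseteq> T}"
  proof
    fix x assume x: "x \<in> copy_edges k \<phi>1 \<inter> copy_edges k \<phi>2"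
    then obtain e where e: "e \<in> fan_edges k" "x = \<phi>2 ` e" unfolding copy_edges_def by auto
    have "x \<subseteq> \<phi>1 ` {..<k}"
      using x copy_edges_subset[OF \<phi>1] copy_pairs_subset_image[of _ \<phi>1] by blast
    moreover have "e \<subseteq> {..<k}" using e(1) fan_edges_subset_Pow by blast
    ultimately have "e \<subseteq> T" using e(2) unfolding T_def by auto
    then show "x \<in> image \<phi>2 ` {e \<in> fan_edges k. e \<subseteq> T}" using e by blast
  qed
  then have "card (copy_edges k \<phi>1 \<inter> copy_edges k \<phi>2) \<le> card (image \<phi>2 ` {e \<in> fan_edges k. e \<subseteq> T})"
    by (intro card_mono) (auto simp: T_def)
  also have "\<dots> \<le> card {e \<in> fan_edges k. e \<subseteq> T}" by (rule card_image_le) (auto simp: T_def)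
  also have "\<dots> \<le> card T" by (rule card_fan_edges_within) (simp add: T_def)
  also have "card T = card ?O"
  proof -
    have "\<phi>2 ` T = ?O" unfolding T_def by (auto simp: image_iff) (metis lessThan_iff)
    moreover have "inj_on \<phi>2 T" using embedding_inj[OF \<phi>2] by (rule inj_on_subset) (auto simp: T_def)
    ultimately show ?thesis using card_image by fastforce
  qed
  finally show ?thesis .
qed

end

text \<open>Two copies sharing l vertices share at most l edges and at most (l choose 2) pairs;
  this is the resulting bound on the factor by which their joint probability can exceed the
  product of their probabilities.\<close>

definition overlap_weight :: "real \<Rightarrow> nat \<Rightarrow> real" where
  "overlap_weight p l = 1 / (p ^ l * (1 - p) ^ (l choose 2))"

lemma overlap_weight_nonneg: "0 \<le> p \<Longrightarrow> p \<le> 1 \<Longrightarrow> 0 \<le> overlap_weight p l"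
  unfolding overlap_weight_def by simp

lemma overlap_weight_0 [simp]: "overlap_weight p 0 = 1"
  unfolding overlap_weight_def by (simp add: binomial_eq_0)

lemma prob_induces_fan_both_le:
  assumes \<phi>1: "\<phi>1 \<in> embeddings n k" and \<phi>2: "\<phi>2 \<in> embeddings n k" and p: "0 < p" "p < 1"
  shows "prob_gnp n p (\<lambda>E. induces_fan k \<phi>1 E \<and> induces_fan k \<phi>2 E)
    \<le> fan_density k p ^ 2 * overlap_weight p (card (\<phi>1 ` {..<k} \<inter> \<phi>2 ` {..<k}))"
proof -
  let ?l = "card (\<phi>1 ` {..<k} \<inter> \<phi>2 ` {..<k})"
  let ?P = "prob_gnp n p (\<lambda>E. induces_fan k \<phi>1 E \<and> induces_fan k \<phi>2 E)"
  let ?S1 = "copy_pairs k \<phi>1" and ?S2 = "copy_pairs k \<phi>2"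
  let ?A1 = "copy_edges k \<phi>1" and ?A2 = "copy_edges k \<phi>2"
  have bound_nonneg: "0 \<le> fan_density k p ^ 2 * overlap_weight p ?l"
    using p by (simp add: overlap_weight_nonneg)
  show ?thesis
  proof (cases "?A1 \<inter> ?S2 = ?A2 \<inter> ?S1")
    case False
    then have "?P = 0" unfolding induces_fan_def by (intro prob_gnp_impossible) blast
    then show ?thesis using bound_nonneg by simp
  next
    case True
    let ?a = "card (?A1 \<inter> ?A2)" and ?c = "card ((?S1 - ?A1) \<inter> (?S2 - ?A2))"
    have joint: "?P * (p ^ ?a * (1 - p) ^ ?c) = fan_density k p ^ 2"
      using prob_gnp_inter_eq_both[OF copy_pairs_subset[OF \<phi>1] copy_pairs_subset[OF \<phi>2]
          copy_edges_subset[OF \<phi>1] copy_edges_subset[OF \<phi>2] True, of p]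
      by (simp add: induces_fan_def fan_density_def power2_eq_square card_copy_edges[OF \<phi>1]
          card_copy_edges[OF \<phi>2] card_copy_non_edges[OF \<phi>1] card_copy_non_edges[OF \<phi>2])
    have le: "p ^ ?l * (1 - p) ^ (?l choose 2) \<le> p ^ ?a * (1 - p) ^ ?c"
    proof -
      have "?a \<le> ?l" by (rule card_copy_edges_overlap[OF \<phi>1 \<phi>2])
      moreover have "?c \<le> card (?S1 \<inter> ?S2)"
        using copy_pairs_subset[OF \<phi>1] finite_all_pairs by (intro card_mono) (auto intro: finite_subset)
      ultimately show ?thesis
        using card_copy_pairs_overlap[OF \<phi>1 \<phi>2] p
        by (intro mult_mono power_decreasing) auto
    qed
    have pos: "0 < p ^ ?l * (1 - p) ^ (?l choose 2)" using p by simp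
    then have "p ^ ?a * (1 - p) ^ ?c \<noteq> 0" using le by linarith
    then have "?P = ?P * (p ^ ?a * (1 - p) ^ ?c) / (p ^ ?a * (1 - p) ^ ?c)" by simp
    also have "\<dots> = fan_density k p ^ 2 / (p ^ ?a * (1 - p) ^ ?c)" by (simp only: joint)
    also have "\<dots> \<le> fan_density k p ^ 2 / (p ^ ?l * (1 - p) ^ (?l choose 2))"
      using le pos by (intro divide_left_mono) auto
    finally show ?thesis by (simp add: overlap_weight_def)
  qed
qed

lemma sum_Pow_card_eq:
  fixes F :: "nat \<Rightarrow> 'a :: comm_semiring_1"
  assumes "finite K"
  shows "(\<Sum>L\<in>Pow K. F (card L)) = (\<Sum>l\<le>card K. of_nat (card K choose l) * F l)"
proof -
  have "(\<Sum>L\<in>Pow K. F (card L)) = (\<Sum>l\<in>{..card K}. \<Sum>L\<in>{L. L \<in> Pow K \<and> card L = l}. F (card L))"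
    by (rule sum.group[symmetric]) (use assms in \<open>auto simp: card_mono\<close>)
  also have "\<dots> = (\<Sum>l\<le>card K. of_nat (card K choose l) * F l)"
  proof (rule sum.cong[OF refl])
    fix l assume "l \<in> {..card K}"
    have "(\<Sum>L\<in>{L. L \<in> Pow K \<and> card L = l}. F (card L)) = (\<Sum>L\<in>{L. L \<subseteq> K \<and> card L = l}. F l)"
      by (rule sum.cong) auto
    also have "\<dots> = of_nat (card {L. L \<subseteq> K \<and> card L = l}) * F l" by simp
    also have "\<dots> = of_nat (card K choose l) * F l" by (simp add: n_subsets[OF assms])
    finally show "(\<Sum>L\<in>{L. L \<in> Pow K \<and> card L = l}. F (card L)) = of_nat (card K choose l) * F l" .
  qed
  finally show ?thesis .
qed

lemma card_PiE_hit_set: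
  assumes T: "T \<subseteq> N" "finite N" and L: "L \<subseteq> K" "finite K"
  shows "card {\<phi> \<in> K \<rightarrow>\<^sub>E N. {i\<in>K. \<phi> i \<in> T} = L}
    = card T ^ card L * (card N - card T) ^ (card K - card L)"
proof -
  have "{\<phi> \<in> K \<rightarrow>\<^sub>E N. {i\<in>K. \<phi> i \<in> T} = L} = (\<Pi>\<^sub>E i\<in>K. if i \<in> L then T else N - T)"
    using T L by (auto simp: PiE_iff extensional_def split: if_splits) blast
  also have "card \<dots> = (\<Prod>i\<in>K. if i \<in> L then card T else card (N - T))"
    using L by (simp add: card_PiE if_distrib)
  also have "\<dots> = card T ^ card L * card (N - T) ^ card (K - L)"
    using L by (simp add: prod.If_cases Int_absorb1 Diff_eq)
  finally show ?thesis
    using T L by (simp add: card_Diff_subset finite_subset)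
qed

lemma sum_embeddings_overlap_le:
  fixes G :: "nat \<Rightarrow> real"
  assumes T: "T \<subseteq> {..<n}" "card T = k" and G: "\<And>l. 0 \<le> G l"
  shows "(\<Sum>\<phi>\<in>embeddings n k. G (card (T \<inter> \<phi> ` {..<k})))
     \<le> (\<Sum>l\<le>k. real (k choose l) * G l * real k ^ l * real (n - k) ^ (k - l))"
proof -
  let ?K = "{..<k}" and ?N = "{..<n}"
  let ?C = "\<lambda>\<phi>. {i\<in>?K. \<phi> i \<in> T}"
  have c: "card (T \<inter> \<phi> ` ?K) = card (?C \<phi>)" if "\<phi> \<in> embeddings n k" for \<phi>
  proof -
    have "T \<inter> \<phi> ` ?K = \<phi> ` ?C \<phi>" by auto
    moreover have "inj_on \<phi> (?C \<phi>)" using embedding_inj[OF that] by (rule inj_on_subset) auto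
    ultimately show ?thesis by (simp add: card_image)
  qed
  have "(\<Sum>\<phi>\<in>embeddings n k. G (card (T \<inter> \<phi> ` ?K))) = (\<Sum>\<phi>\<in>embeddings n k. G (card (?C \<phi>)))"
    by (rule sum.cong) (simp_all add: c)
  also have "\<dots> \<le> (\<Sum>\<phi>\<in>?K \<rightarrow>\<^sub>E ?N. G (card (?C \<phi>)))"
    by (rule sum_mono2) (auto simp: embeddings_def G intro: finite_PiE)
  also have "\<dots> = (\<Sum>L\<in>Pow ?K. \<Sum>\<phi>\<in>{\<phi>. \<phi> \<in> ?K \<rightarrow>\<^sub>E ?N \<and> ?C \<phi> = L}. G (card (?C \<phi>)))"
    by (rule sum.group[symmetric]) (auto intro: finite_PiE)
  also have "\<dots> = (\<Sum>L\<in>Pow ?K. real (card T ^ card L * (card ?N - card T) ^ (card ?K - card L)) * G (card L))"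
  proof (rule sum.cong[OF refl])
    fix L assume L: "L \<in> Pow ?K"
    have "(\<Sum>\<phi>\<in>{\<phi>. \<phi> \<in> ?K \<rightarrow>\<^sub>E ?N \<and> ?C \<phi> = L}. G (card (?C \<phi>))) = (\<Sum>\<phi>\<in>{\<phi> \<in> ?K \<rightarrow>\<^sub>E ?N. ?C \<phi> = L}. G (card L))"
      by (rule sum.cong) auto
    also have "\<dots> = real (card {\<phi> \<in> ?K \<rightarrow>\<^sub>E ?N. ?C \<phi> = L}) * G (card L)" by simp
    also have "card {\<phi> \<in> ?K \<rightarrow>\<^sub>E ?N. ?C \<phi> = L} = card T ^ card L * (card ?N - card T) ^ (card ?K - card L)"
      by (rule card_PiE_hit_set) (use T L in auto)
    finally show "(\<Sum>\<phi>\<in>{\<phi>. \<phi> \<in> ?K \<rightarrow>\<^sub>E ?N \<and> ?C \<phi> = L}. G (card (?C \<phi>))) = real (card T ^ card L * (card ?N - card T) ^ (card ?K - card L)) * G (card L)" .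
  qed
  also have "\<dots> = (\<Sum>L\<in>Pow ?K. (\<lambda>l. real k ^ l * real (n - k) ^ (k - l) * G l) (card L))"
    using T by (intro sum.cong) simp_all
  also have "\<dots> = (\<Sum>l\<le>k. real (k choose l) * (real k ^ l * real (n - k) ^ (k - l) * G l))"
    using sum_Pow_card_eq[of ?K "\<lambda>l. real k ^ l * real (n - k) ^ (k - l) * G l"] by simp
  finally show ?thesis by (simp add: mult_ac)
qed

section \<open>The second moment method\<close>

lemma second_moment_inequality:
  fixes w X :: "'a \<Rightarrow> real"
  assumes w: "\<And>x. x \<in> A \<Longrightarrow> 0 \<le> w x" and X: "\<And>x. x \<in> A \<Longrightarrow> 0 \<le> X x"
  shows "(\<Sum>x\<in>A. w x * X x)\<^sup>2 \<le> (\<Sum>x\<in>A. if X x > 0 then w x else 0) * (\<Sum>x\<in>A. w x * (X x)\<^sup>2)"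
proof -
  let ?Z = "\<lambda>x. if X x > 0 then 1 else (0::real)"
  have "(\<Sum>x\<in>A. (sqrt (w x) * ?Z x) * (sqrt (w x) * X x))\<^sup>2
      \<le> (\<Sum>x\<in>A. (sqrt (w x) * ?Z x)\<^sup>2) * (\<Sum>x\<in>A. (sqrt (w x) * X x)\<^sup>2)"
    by (rule Cauchy_Schwarz_ineq_sum)
  moreover have "(\<Sum>x\<in>A. (sqrt (w x) * ?Z x) * (sqrt (w x) * X x)) = (\<Sum>x\<in>A. w x * X x)"
    using w X by (intro sum.cong) (auto simp: real_sqrt_mult[symmetric] order.strict_iff_order)
  moreover have "(\<Sum>x\<in>A. (sqrt (w x) * ?Z x)\<^sup>2) = (\<Sum>x\<in>A. if X x > 0 then w x else 0)"
    using w by (intro sum.cong) (auto simp: power_mult_distrib)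
  moreover have "(\<Sum>x\<in>A. (sqrt (w x) * X x)\<^sup>2) = (\<Sum>x\<in>A. w x * (X x)\<^sup>2)"
    using w by (intro sum.cong) (auto simp: power_mult_distrib)
  ultimately show ?thesis by simp
qed

definition gnp_weight :: "nat \<Rightarrow> real \<Rightarrow> nat set set \<Rightarrow> real" where
  "gnp_weight n p E = p ^ card E * (1 - p) ^ (card (all_pairs n) - card E)"

definition fan_count :: "nat \<Rightarrow> nat \<Rightarrow> nat set set \<Rightarrow> real" where
  "fan_count n k E = (\<Sum>\<phi>\<in>embeddings n k. if induces_fan k \<phi> E then 1 else 0)"

lemma prob_gnp_eq_sum_weight:
  "prob_gnp n p B = (\<Sum>E\<in>Pow (all_pairs n). if B E then gnp_weight n p E else 0)"
  unfolding prob_gnp_def gnp_weight_def ..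

lemma expectation_fan_count:
  "(\<Sum>E\<in>Pow (all_pairs n). gnp_weight n p E * fan_count n k E)
    = (\<Sum>\<phi>\<in>embeddings n k. prob_gnp n p (induces_fan k \<phi>))"
proof -
  have "(\<Sum>E\<in>Pow (all_pairs n). gnp_weight n p E * fan_count n k E)
      = (\<Sum>E\<in>Pow (all_pairs n). \<Sum>\<phi>\<in>embeddings n k. if induces_fan k \<phi> E then gnp_weight n p E else 0)"
    unfolding fan_count_def by (simp add: sum_distrib_left if_distrib cong: if_cong)
  also have "\<dots> = (\<Sum>\<phi>\<in>embeddings n k. \<Sum>E\<in>Pow (all_pairs n). if induces_fan k \<phi> E then gnp_weight n p E else 0)"
    by (rule sum.swap)
  finally show ?thesis by (simp add: prob_gnp_eq_sum_weight)
qed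

lemma second_moment_fan_count:
  "(\<Sum>E\<in>Pow (all_pairs n). gnp_weight n p E * (fan_count n k E)\<^sup>2)
    = (\<Sum>\<phi>1\<in>embeddings n k. \<Sum>\<phi>2\<in>embeddings n k.
        prob_gnp n p (\<lambda>E. induces_fan k \<phi>1 E \<and> induces_fan k \<phi>2 E))"
proof -
  let ?I = "embeddings n k" and ?\<Omega> = "Pow (all_pairs n)"
  have "(fan_count n k E)\<^sup>2
      = (\<Sum>\<phi>1\<in>?I. \<Sum>\<phi>2\<in>?I. if induces_fan k \<phi>1 E \<and> induces_fan k \<phi>2 E then 1 else 0)" for E
    unfolding fan_count_def power2_eq_square sum_product by (intro sum.cong) auto
  then have "(\<Sum>E\<in>?\<Omega>. gnp_weight n p E * (fan_count n k E)\<^sup>2)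
      = (\<Sum>E\<in>?\<Omega>. \<Sum>\<phi>1\<in>?I. \<Sum>\<phi>2\<in>?I.
          if induces_fan k \<phi>1 E \<and> induces_fan k \<phi>2 E then gnp_weight n p E else 0)"
    by (simp add: sum_distrib_left if_distrib cong: if_cong)
  also have "\<dots> = (\<Sum>\<phi>1\<in>?I. \<Sum>\<phi>2\<in>?I. \<Sum>E\<in>?\<Omega>.
          if induces_fan k \<phi>1 E \<and> induces_fan k \<phi>2 E then gnp_weight n p E else 0)"
    by (subst sum.swap) (simp only: sum.swap[of _ ?\<Omega>])
  finally show ?thesis by (simp add: prob_gnp_eq_sum_weight)
qed

definition overlap_sum :: "nat \<Rightarrow> nat \<Rightarrow> real \<Rightarrow> real" where
  "overlap_sum n k p =
    (\<Sum>l=1..k. real (k choose l) * overlap_weight p l * (real k / (real n - real k)) ^ l)"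

lemma overlap_sum_nonneg: "0 \<le> p \<Longrightarrow> p \<le> 1 \<Longrightarrow> k \<le> n \<Longrightarrow> 0 \<le> overlap_sum n k p"
  unfolding overlap_sum_def by (intro sum_nonneg mult_nonneg_nonneg overlap_weight_nonneg) auto

lemma card_embeddings_ge: "real (n - k) ^ k \<le> real (card (embeddings n k))"
proof -
  have "real (n - k) ^ k = (\<Prod>i<k. real (n - k))" by simp
  also have "\<dots> \<le> (\<Prod>i<k. real (n - i))" by (intro prod_mono) auto
  finally show ?thesis by (simp add: card_embeddings)
qed

lemma sum_overlap_weight_le:
  assumes \<phi>1: "\<phi>1 \<in> embeddings n k" and p: "0 \<le> p" "p \<le> 1" and k: "k < n"
  shows "(\<Sum>\<phi>2\<in>embeddings n k. overlap_weight p (card (\<phi>1 ` {..<k} \<inter> \<phi>2 ` {..<k})))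
    \<le> (1 + overlap_sum n k p) * card (embeddings n k)"
proof -
  let ?r = "real k / (real n - real k)"
  have T: "\<phi>1 ` {..<k} \<subseteq> {..<n}" "card (\<phi>1 ` {..<k}) = k"
    using embedding_range[OF \<phi>1] card_image[OF embedding_inj[OF \<phi>1]] by auto
  have "(\<Sum>\<phi>2\<in>embeddings n k. overlap_weight p (card (\<phi>1 ` {..<k} \<inter> \<phi>2 ` {..<k})))
      \<le> (\<Sum>l\<le>k. real (k choose l) * overlap_weight p l * real k ^ l * real (n - k) ^ (k - l))"
    using p by (intro sum_embeddings_overlap_le[OF T] overlap_weight_nonneg)
  also have "\<dots> = real (n - k) ^ k * (\<Sum>l\<le>k. real (k choose l) * overlap_weight p l * ?r ^ l)"
    unfolding sum_distrib_left
  proof (rule sum.cong[OF refl])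
    fix l assume "l \<in> {..k}"
    then have "real (n - k) ^ k = real (n - k) ^ l * real (n - k) ^ (k - l)"
      by (simp add: power_add[symmetric])
    then show "real (k choose l) * overlap_weight p l * real k ^ l * real (n - k) ^ (k - l)
        = real (n - k) ^ k * (real (k choose l) * overlap_weight p l * ?r ^ l)"
      using k by (simp add: power_divide of_nat_diff)
  qed
  also have "(\<Sum>l\<le>k. real (k choose l) * overlap_weight p l * ?r ^ l) = 1 + overlap_sum n k p"
    unfolding overlap_sum_def by (simp add: atMost_atLeast0 sum.atLeast_Suc_atMost)
  also have "real (n - k) ^ k * (1 + overlap_sum n k p) \<le> card (embeddings n k) * (1 + overlap_sum n k p)"
    by (rule mult_right_mono[OF card_embeddings_ge]) (use overlap_sum_nonneg[OF p] k in simp)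
  finally show ?thesis by (simp add: mult_ac)
qed

lemma prob_induces_some_fan_ge:
  assumes p: "0 < p" "p < 1" and k: "k < n"
  shows "1 / (1 + overlap_sum n k p) \<le> prob_gnp n p (\<lambda>E. \<exists>\<phi>\<in>embeddings n k. induces_fan k \<phi> E)"
proof -
  let ?I = "embeddings n k" and ?\<Omega> = "Pow (all_pairs n)" and ?\<delta> = "overlap_sum n k p"
  let ?w = "gnp_weight n p" and ?X = "fan_count n k"
  define c where "c = real (card ?I)"
  define \<pi> where "\<pi> = fan_density k p"
  have \<delta>: "0 \<le> ?\<delta>" using p k by (intro overlap_sum_nonneg) auto
  have "0 < real (n - k) ^ k" using k by simp
  then have c_pos: "0 < c" unfolding c_def using card_embeddings_ge by (rule less_le_trans)
  have \<pi>_pos: "0 < \<pi>" unfolding \<pi>_def fan_density_def using p by simp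
  have w_nonneg: "0 \<le> ?w E" for E unfolding gnp_weight_def using p by simp
  have X_nonneg: "0 \<le> ?X E" for E unfolding fan_count_def by (simp add: sum_nonneg)
  have first: "(\<Sum>E\<in>?\<Omega>. ?w E * ?X E) = c * \<pi>"
    unfolding expectation_fan_count c_def \<pi>_def by (simp add: prob_induces_fan)
  have "(\<Sum>E\<in>?\<Omega>. ?w E * (?X E)\<^sup>2)
      = (\<Sum>\<phi>1\<in>?I. \<Sum>\<phi>2\<in>?I. prob_gnp n p (\<lambda>E. induces_fan k \<phi>1 E \<and> induces_fan k \<phi>2 E))"
    by (rule second_moment_fan_count)
  also have "\<dots> \<le> (\<Sum>\<phi>1\<in>?I. \<pi>\<^sup>2 * (\<Sum>\<phi>2\<in>?I. overlap_weight p (card (\<phi>1 ` {..<k} \<inter> \<phi>2 ` {..<k}))))"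
    unfolding sum_distrib_left \<pi>_def by (intro sum_mono prob_induces_fan_both_le p)
  also have "\<dots> \<le> (\<Sum>\<phi>1\<in>?I. \<pi>\<^sup>2 * ((1 + ?\<delta>) * c))"
    unfolding c_def using p k by (intro sum_mono mult_left_mono sum_overlap_weight_le) auto
  also have "\<dots> = (1 + ?\<delta>) * (c * \<pi>)\<^sup>2" by (simp add: c_def power2_eq_square)
  finally have second: "(\<Sum>E\<in>?\<Omega>. ?w E * (?X E)\<^sup>2) \<le> (1 + ?\<delta>) * (c * \<pi>)\<^sup>2" .
  define P where "P = (\<Sum>E\<in>?\<Omega>. if ?X E > 0 then ?w E else 0)"
  have "(c * \<pi>)\<^sup>2 \<le> P * (\<Sum>E\<in>?\<Omega>. ?w E * (?X E)\<^sup>2)"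
    unfolding first[symmetric] P_def by (rule second_moment_inequality[OF w_nonneg X_nonneg])
  also have "\<dots> \<le> P * ((1 + ?\<delta>) * (c * \<pi>)\<^sup>2)"
    using second w_nonneg by (intro mult_left_mono) (auto simp: P_def intro: sum_nonneg)
  finally have "1 * (c * \<pi>)\<^sup>2 \<le> (P * (1 + ?\<delta>)) * (c * \<pi>)\<^sup>2" by (simp add: mult_ac)
  then have "1 \<le> P * (1 + ?\<delta>)" using c_pos \<pi>_pos by (simp add: mult_le_cancel_right)
  then have "1 / (1 + ?\<delta>) \<le> P" using \<delta> by (simp add: divide_le_eq mult_ac)
  also have "P \<le> prob_gnp n p (\<lambda>E. \<exists>\<phi>\<in>?I. induces_fan k \<phi> E)"
  proof -
    have "\<exists>\<phi>\<in>?I. induces_fan k \<phi> E" if "?X E > 0" for E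
      using that unfolding fan_count_def by (metis (mono_tags, lifting) less_irrefl sum.neutral)
    then show ?thesis
      unfolding P_def prob_gnp_eq_sum_weight using w_nonneg by (intro sum_mono) auto
  qed
  finally show ?thesis .
qed

lemma quadratic_le_max_endpoints:
  fixes a b :: real and l k :: nat
  assumes "1 \<le> l" "l \<le> k" "0 \<le> b"
  shows "l * a + real l * (real l - 1) / 2 * b \<le> max a (k * a + real k * (real k - 1) / 2 * b)"
proof -
  define h where "h t = t * a + t * (t - 1) / 2 * b" for t :: real
  have k1: "real k \<ge> 1" using assms by simp
  have key: "(real k - 1) * h l \<le> (real k - real l) * h 1 + (real l - 1) * h k"
  proof -
    have "(real k - real l) * h 1 + (real l - 1) * h k - (real k - 1) * h l
        = b / 2 * ((real k - 1) * (real l - 1) * (real k - real l))"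
      unfolding h_def by (simp add: field_simps)
    moreover have "0 \<le> b / 2 * ((real k - 1) * (real l - 1) * (real k - real l))"
      using assms by (intro mult_nonneg_nonneg) auto
    ultimately show ?thesis by linarith
  qed
  have "(real k - real l) * h 1 + (real l - 1) * h k \<le> (real k - real l) * max (h 1) (h k) + (real l - 1) * max (h 1) (h k)"
    using assms by (intro add_mono mult_left_mono) auto
  also have "\<dots> = (real k - 1) * max (h 1) (h k)" by (simp add: algebra_simps)
  finally have fin1: "(real k - 1) * h l \<le> (real k - 1) * max (h 1) (h k)" using key by linarith
  then have "h l \<le> max (h 1) (h k)"
  proof (cases "real k = 1")
    case True then have "l = 1" using assms by simp
    then show ?thesis by simp
  next
    case False then have "real k - 1 > 0" using k1 by simp
    then show ?thesis using fin1 by (simp add: mult_le_cancel_left_pos)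
  qed
  then show ?thesis unfolding h_def by simp
qed

lemma mult_exp_neg_le: "(x :: real) * exp (- x) \<le> exp (-1)"
proof -
  have "x \<le> exp (x - 1)" using exp_ge_add_one_self[of "x - 1"] by simp
  then have "x * exp (- x) \<le> exp (x - 1) * exp (- x)" by (simp add: mult_right_mono)
  also have "\<dots> = exp (-1)" by (simp add: exp_add[symmetric])
  finally show ?thesis .
qed

lemma exp_neg_one_less_half: "exp (-1 :: real) < 1 / 2"
proof -
  have "(2 :: real) < 1 + 1 + 1\<^sup>2 / 2" by simp
  also have "\<dots> \<le> exp 1" by (rule exp_lower_Taylor_quadratic) simp
  finally show ?thesis by (simp add: exp_minus field_simps)
qed

lemma overlap_term_le_exp:
  assumes p: "0 < p" "p < 1" and k: "k < n" and l: "1 \<le> l" "l \<le> k"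
  defines "r \<equiv> real k ^ 2 / ((real n - real k) * p)" and "s \<equiv> ln (1 / (1 - p))"
  shows "real (k choose l) * overlap_weight p l * (real k / (real n - real k)) ^ l
    \<le> exp (l * ln r + real l * (real l - 1) / 2 * s)"
proof -
  have nk: "0 < real n - real k" using k by simp
  have r: "0 < r" unfolding r_def using nk p l by simp
  have "real (k choose l) \<le> real k ^ l"
    using binomial_le_pow[OF l(2)] by (metis of_nat_le_iff of_nat_power)
  then have "real (k choose l) * overlap_weight p l * (real k / (real n - real k)) ^ l
      \<le> real k ^ l * overlap_weight p l * (real k / (real n - real k)) ^ l"
    using p nk by (intro mult_right_mono) (auto simp: overlap_weight_def)
  also have "\<dots> = r ^ l * (1 / (1 - p)) ^ (l choose 2)"
  proof -
    have "r ^ l = real k ^ l * real k ^ l / ((real n - real k) ^ l * p ^ l)"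
      unfolding r_def by (simp add: power_divide power_mult_distrib power2_eq_square)
    then show ?thesis unfolding overlap_weight_def using p nk by (simp add: power_divide field_simps)
  qed
  also have "\<dots> = exp (l * ln r + real (l choose 2) * s)"
    unfolding s_def using r p
    by (simp add: exp_add exp_of_nat_mult[symmetric] ln_realpow[symmetric] mult.commute)
  also have "real (l choose 2) = real l * (real l - 1) / 2"
  proof -
    have "even (l * (l - 1))" by (cases "even l") auto
    then show ?thesis using l by (simp add: choose_two real_of_nat_div of_nat_diff)
  qed
  finally show ?thesis .
qed

text \<open>By convexity in l, each term of the overlap sum is at most its value at l = 1 or at
  l = k; the conditions make the first of these r and the sum of the last ones at most 1/e.\<close>

lemma overlap_sum_less_1:
  assumes p: "0 < p" "p < 1" and k: "1 \<le> k" "k < n"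
  defines "r \<equiv> real k ^ 2 / ((real n - real k) * p)" and "s \<equiv> ln (1 / (1 - p))"
  assumes small_r: "real k * r \<le> 1 / 4" and steep: "ln r + (real k - 1) / 2 * s \<le> -1"
  shows "overlap_sum n k p < 1"
proof -
  have r: "0 < r" unfolding r_def using k p by simp
  have s: "0 \<le> s" unfolding s_def using p by simp
  have term_le: "real (k choose l) * overlap_weight p l * (real k / (real n - real k)) ^ l
      \<le> r + exp (k * (ln r + (real k - 1) / 2 * s))" if l: "l \<in> {1..k}" for l
  proof -
    have "l * ln r + real l * (real l - 1) / 2 * s \<le> max (ln r) (k * ln r + real k * (real k - 1) / 2 * s)"
      using quadratic_le_max_endpoints[of l k s "ln r"] l s by simp
    then have "exp (l * ln r + real l * (real l - 1) / 2 * s)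
        \<le> exp (max (ln r) (k * ln r + real k * (real k - 1) / 2 * s))"
      by simp
    also have "\<dots> \<le> exp (ln r) + exp (k * ln r + real k * (real k - 1) / 2 * s)"
      by (simp add: max_def)
    also have "\<dots> = r + exp (k * (ln r + (real k - 1) / 2 * s))"
      using r by (simp add: algebra_simps)
    finally show ?thesis
      using overlap_term_le_exp[OF p k(2), of l] l unfolding r_def s_def by simp
  qed
  have "overlap_sum n k p \<le> (\<Sum>l\<in>{1..k}. r + exp (k * (ln r + (real k - 1) / 2 * s)))"
    unfolding overlap_sum_def by (rule sum_mono) (rule term_le)
  also have "\<dots> = real k * r + real k * exp (k * (ln r + (real k - 1) / 2 * s))" by (simp add: algebra_simps)
  also have "real k * exp (k * (ln r + (real k - 1) / 2 * s)) \<le> real k * exp (- real k)"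
  proof -
    have "real k * (ln r + (real k - 1) / 2 * s) \<le> real k * (-1)"
      using steep by (intro mult_left_mono) auto
    then show ?thesis by (intro mult_left_mono) auto
  qed
  also have "\<dots> \<le> exp (-1)" by (rule mult_exp_neg_le)
  finally show ?thesis using small_r exp_neg_one_less_half by linarith
qed

section \<open>Choosing the size of the fan\<close>

definition lower_bound :: "nat \<Rightarrow> real \<Rightarrow> real \<Rightarrow> real" where
  "lower_bound n p \<epsilon> = (2 - \<epsilon> + 4 * ln p / ln (real n * p)) * log (1 / (1 - p)) (real n * p)"

definition fan_size :: "nat \<Rightarrow> real \<Rightarrow> real \<Rightarrow> nat" where
  "fan_size n p \<epsilon> = nat \<lceil>lower_bound n p \<epsilon>\<rceil>"

context
  fixes n :: nat and p \<epsilon> :: real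
  assumes eps: "0 < \<epsilon>" "\<epsilon> \<le> 1 / 2"
    and dense: "4 \<le> p * root 4 (real n) / ln (real n)"
    and sparse: "1 \<le> (1 - p) * ln (real n)"
    and large: "32 / \<epsilon> \<le> sqrt (ln (real n))"
begin

lemma ln_n_ge: "4096 \<le> ln (real n)"
proof -
  have "64 \<le> 32 / \<epsilon>" using eps by (simp add: field_simps)
  then have "64 \<le> sqrt (ln (real n))" using large by linarith
  then have "64\<^sup>2 \<le> (sqrt (ln (real n)))\<^sup>2" by (rule power_mono) simp
  moreover have "0 < sqrt (ln (real n))" using \<open>64 \<le> sqrt _\<close> by linarith
  then have "0 \<le> ln (real n)" by simp
  ultimately show ?thesis by simp
qed

lemma eps_ln_n_ge: "32 * sqrt (ln (real n)) \<le> \<epsilon> * ln (real n)"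
proof -
  have "32 * sqrt (ln (real n)) \<le> \<epsilon> * sqrt (ln (real n)) * sqrt (ln (real n))"
    using large eps ln_n_ge by (intro mult_right_mono) (simp_all add: field_simps)
  then show ?thesis using ln_n_ge by (simp add: mult.assoc)
qed

lemma ln_ln_n_le: "2 * ln (ln (real n)) \<le> \<epsilon> * ln (real n) / 8"
proof -
  have "ln (ln (real n)) = 2 * ln (sqrt (ln (real n)))" using ln_n_ge by (simp add: ln_sqrt)
  also have "\<dots> \<le> 2 * sqrt (ln (real n))" using ln_le_minus_one[of "sqrt (ln (real n))"] ln_n_ge by simp
  finally show ?thesis using eps_ln_n_ge by linarith
qed

lemma n_gt_1: "1 < n"
proof (rule ccontr)
  assume "\<not> 1 < n"
  then have "ln (real n) = 0" by (cases n) auto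
  then show False using ln_n_ge by simp
qed

lemma p_root_ge: "4 * ln (real n) \<le> p * root 4 (real n)"
  using dense ln_n_ge by (simp add: le_divide_eq)

lemma p_pos: "0 < p"
proof -
  have "0 < p * root 4 (real n)" using p_root_ge ln_n_ge by linarith
  moreover have "0 \<le> root 4 (real n)" by simp
  ultimately show ?thesis by (simp add: zero_less_mult_iff)
qed

lemma p_less_1: "p < 1"
  using sparse ln_n_ge by (smt (verit) mult_nonpos_nonneg)

lemma ln_p_ge: "ln 4 + ln (ln (real n)) - ln (real n) / 4 \<le> ln p"
proof -
  have "0 < root 4 (real n)" using n_gt_1 by simp
  then have "4 * ln (real n) / root 4 (real n) \<le> p" using p_root_ge by (simp add: divide_le_eq mult.commute)
  moreover have "0 < 4 * ln (real n) / root 4 (real n)"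
    using \<open>0 < root 4 _\<close> ln_n_ge by (intro divide_pos_pos) linarith+
  ultimately have "ln (4 * ln (real n) / root 4 (real n)) \<le> ln p" by simp
  moreover have "ln (4 * ln (real n) / root 4 (real n)) = ln 4 + ln (ln (real n)) - ln (real n) / 4"
    using \<open>0 < root 4 _\<close> ln_n_ge n_gt_1 by (simp add: ln_div ln_mult ln_root)
  ultimately show ?thesis by simp
qed

lemma ln_inverse_one_minus_p_bounds:
  shows "p \<le> ln (1 / (1 - p))" and "ln (1 / (1 - p)) \<le> ln (ln (real n))"
proof -
  have q: "0 < 1 - p" using p_less_1 by simp
  show "p \<le> ln (1 / (1 - p))" using ln_le_minus_one[OF q] q by (simp add: ln_div)
  have "1 / (1 - p) \<le> ln (real n)" using sparse q by (simp add: divide_le_eq mult.commute)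
  then show "ln (1 / (1 - p)) \<le> ln (ln (real n))" using q ln_n_ge by (subst ln_le_cancel_iff) auto
qed


lemma ln_ln_n_nonneg: "0 \<le> ln (ln (real n))"
  using ln_n_ge by simp

lemma ln_p_ge_neg_quarter: "- ln (real n) / 4 \<le> ln p"
  using ln_p_ge ln_ln_n_nonneg ln_ge_zero[of 4] by linarith

lemma ln_inverse_one_minus_p_pos: "0 < ln (1 / (1 - p))"
  using ln_inverse_one_minus_p_bounds(1) p_pos by linarith

lemma ln_np_eq: "ln (real n * p) = ln (real n) + ln p"
  using n_gt_1 p_pos by (simp add: ln_mult)

lemma lower_bound_eq:
  "lower_bound n p \<epsilon> = ((2 - \<epsilon>) * (ln (real n) + ln p) + 4 * ln p) / ln (1 / (1 - p))"
proof -
  define L where "L = ln (real n)"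
  define N where "N = (2 - \<epsilon>) * (L + ln p) + 4 * ln p"
  have nz: "L + ln p \<noteq> 0" using ln_p_ge_neg_quarter ln_n_ge unfolding L_def by linarith
  have "lower_bound n p \<epsilon> = (2 - \<epsilon> + 4 * ln p / (L + ln p)) * ((L + ln p) / ln (1 / (1 - p)))"
    unfolding lower_bound_def log_def ln_np_eq L_def ..
  also have "2 - \<epsilon> + 4 * ln p / (L + ln p) = N / (L + ln p)"
    unfolding N_def using nz by (simp add: field_simps)
  finally show ?thesis using nz unfolding N_def L_def by simp
qed

lemma lower_bound_gt_2: "2 < lower_bound n p \<epsilon>"
proof -
  define L where "L = ln (real n)"
  define A where "A = (2 - \<epsilon>) * (L + ln p)"
  have "3 / 2 * (L + ln p) \<le> A"
    using eps ln_p_ge_neg_quarter ln_n_ge unfolding A_def L_def by (intro mult_right_mono) auto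
  moreover have "0 \<le> ln (4 :: real)" by simp
  ultimately have "2 * ln L < A + 4 * ln p"
    using ln_p_ge ln_n_ge ln_ln_n_nonneg unfolding L_def[symmetric] by argo
  then have "2 * ln (1 / (1 - p)) < A + 4 * ln p"
    using ln_inverse_one_minus_p_bounds(2) unfolding L_def by linarith
  then show ?thesis
    using ln_inverse_one_minus_p_pos unfolding lower_bound_eq A_def L_def
    by (simp add: less_divide_eq)
qed

lemma lower_bound_le: "lower_bound n p \<epsilon> \<le> 2 * ln (real n) / p"
proof -
  define L where "L = ln (real n)"
  define A where "A = (2 - \<epsilon>) * (L + ln p)"
  have "ln p \<le> 0" using p_pos p_less_1 by simp
  moreover have "A \<le> 2 * (L + ln p)"
    using eps ln_p_ge_neg_quarter ln_n_ge unfolding A_def L_def by (intro mult_right_mono) auto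
  ultimately have "A + 4 * ln p \<le> 2 * L" by argo
  moreover have "p \<le> ln (1 / (1 - p))" by (rule ln_inverse_one_minus_p_bounds(1))
  ultimately have "(A + 4 * ln p) / ln (1 / (1 - p)) \<le> 2 * L / p"
    using p_pos ln_n_ge unfolding L_def by (intro frac_le) simp_all
  then show ?thesis unfolding lower_bound_eq A_def L_def .
qed

lemma fan_size_ge_3: "3 \<le> fan_size n p \<epsilon>"
  using lower_bound_gt_2 unfolding fan_size_def by linarith

lemma lower_bound_le_fan_size: "lower_bound n p \<epsilon> \<le> real (fan_size n p \<epsilon>)"
  using lower_bound_gt_2 unfolding fan_size_def by linarith

lemma fan_size_le: "real (fan_size n p \<epsilon>) \<le> 3 * ln (real n) / p"
proof -
  have "real (fan_size n p \<epsilon>) < lower_bound n p \<epsilon> + 1"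
    using lower_bound_gt_2 unfolding fan_size_def by linarith
  moreover have "1 \<le> ln (real n) / p" using ln_n_ge p_pos p_less_1 by (simp add: le_divide_eq)
  ultimately show ?thesis using lower_bound_le by simp
qed

lemma fan_size_le_half: "2 * real (fan_size n p \<epsilon>) \<le> real n"
proof -
  define R where "R = root 4 (real n)"
  have R4: "R ^ 4 = real n" unfolding R_def using n_gt_1 by (simp add: real_root_pow_pos)
  have "3 * ln (real n) / p \<le> 3 / 4 * R"
    using p_root_ge p_pos unfolding R_def by (simp add: divide_le_eq field_simps)
  moreover have "2 \<le> R"
  proof -
    have "4 * ln (real n) \<le> p * R" using p_root_ge unfolding R_def .
    also have "\<dots> \<le> R" using p_less_1 n_gt_1 unfolding R_def by (simp add: mult_left_le_one_le)
    finally show ?thesis using ln_n_ge by linarith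
  qed
  then have "3 / 2 * R \<le> R * R ^ 3"
    using power_mono[of 2 R 3] by (simp add: mult_left_mono)
  ultimately show ?thesis using fan_size_le R4 by (simp add: power_eq_if)
qed

lemma fan_size_cube_le:
  defines "k \<equiv> real (fan_size n p \<epsilon>)"
  shows "k * (k\<^sup>2 / ((real n - k) * p)) \<le> 1 / 4"
proof -
  define L where "L = ln (real n)"
  have L: "1 \<le> L" using ln_n_ge unfolding L_def by simp
  have nk: "real n / 2 \<le> real n - k" using fan_size_le_half unfolding k_def by simp
  have "(4 * L) ^ 4 \<le> (p * root 4 (real n)) ^ 4"
    using p_root_ge L unfolding L_def by (intro power_mono) auto
  then have p4: "256 * L ^ 4 \<le> p ^ 4 * real n"
    using n_gt_1 by (simp add: power_mult_distrib real_root_pow_pos)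
  have "(k * p) ^ 3 \<le> (3 * L) ^ 3"
    using fan_size_le p_pos unfolding k_def L_def by (intro power_mono) (auto simp: le_divide_eq)
  then have "4 * (k ^ 3 * p ^ 3) \<le> 108 * L ^ 3" by (simp add: power_mult_distrib)
  also have "\<dots> \<le> 128 * L ^ 4"
    using L power_increasing[of 3 4 L] zero_le_power[of L 3] by linarith
  also have "\<dots> \<le> real n / 2 * p ^ 4" using p4 by (simp add: mult.commute)
  also have "\<dots> \<le> (real n - k) * p ^ 4" using nk by (intro mult_right_mono) auto
  finally have "4 * k ^ 3 * p ^ 3 \<le> ((real n - k) * p) * p ^ 3" by (simp add: power_eq_if mult_ac)
  then have "4 * k ^ 3 \<le> (real n - k) * p" using p_pos by (simp add: mult_le_cancel_right)
  moreover have "0 < (real n - k) * p" using nk n_gt_1 p_pos by simp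
  ultimately show ?thesis by (simp add: power_eq_if divide_le_eq)
qed

lemma fan_size_steep:
  defines "k \<equiv> real (fan_size n p \<epsilon>)"
  shows "ln (k\<^sup>2 / ((real n - k) * p)) + (k - 1) / 2 * ln (1 / (1 - p)) \<le> -1"
proof -
  define L where "L = ln (real n)"
  define s where "s = ln (1 / (1 - p))"
  have k: "0 < k" using fan_size_ge_3 unfolding k_def by simp
  have nk: "real n / 2 \<le> real n - k" using fan_size_le_half unfolding k_def by simp
  have n: "0 < real n" using n_gt_1 by simp
  have "ln k \<le> ln (3 * L / p)" using k fan_size_le unfolding k_def L_def by simp
  also have "\<dots> = ln 3 + ln L - ln p" using ln_n_ge p_pos unfolding L_def by (simp add: ln_div ln_mult)
  finally have ln_k: "ln k \<le> ln 3 + ln L - ln p" .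
  have "ln (real n / 2) \<le> ln (real n - k)" using nk n by simp
  then have ln_nk: "L - ln 2 \<le> ln (real n - k)" using n unfolding L_def by (simp add: ln_div)
  have split: "ln (k\<^sup>2 / ((real n - k) * p)) = 2 * ln k - ln (real n - k) - ln p"
    using k nk n p_pos by (simp add: ln_div ln_mult ln_realpow)
  have "(k - 1) * s \<le> lower_bound n p \<epsilon> * s"
    using lower_bound_gt_2 ln_inverse_one_minus_p_pos unfolding k_def fan_size_def s_def
    by (intro mult_right_mono) linarith+
  also have "\<dots> = (2 - \<epsilon>) * (L + ln p) + 4 * ln p"
    using ln_inverse_one_minus_p_pos unfolding lower_bound_eq L_def s_def by simp
  also have "\<dots> = 2 * L + 6 * ln p - \<epsilon> * L - \<epsilon> * ln p" by (simp add: algebra_simps)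
  finally have exponent: "(k - 1) * s \<le> 2 * L + 6 * ln p - \<epsilon> * L - \<epsilon> * ln p" .
  have "\<epsilon> * (- ln p) \<le> \<epsilon> * (L / 4)"
    using ln_p_ge_neg_quarter eps unfolding L_def by (intro mult_left_mono) auto
  then have "- (\<epsilon> * ln p) \<le> \<epsilon> * L / 4" by simp
  moreover have "40 \<le> \<epsilon> * L"
  proof -
    have "sqrt 4096 \<le> sqrt L" using ln_n_ge unfolding L_def by (rule real_sqrt_le_mono)
    then have "64 \<le> sqrt L" by simp
    then show ?thesis using eps_ln_n_ge unfolding L_def by linarith
  qed
  moreover have "ln (3 :: real) \<le> 2" "ln (2 :: real) \<le> 1"
    using ln_le_minus_one[of 3] ln_le_minus_one[of 2] by simp_all
  moreover have "(k - 1) / 2 * s = (k - 1) * s / 2" by simp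
  ultimately show ?thesis
    using split ln_k ln_nk exponent ln_ln_n_le unfolding L_def[symmetric] s_def[symmetric]
    by linarith
qed

lemma overlap_sum_fan_size_less_1: "overlap_sum n (fan_size n p \<epsilon>) p < 1"
  using fan_size_ge_3 fan_size_le_half n_gt_1 fan_size_cube_le fan_size_steep
  by (intro overlap_sum_less_1 p_pos p_less_1) auto

lemma lower_bound_antimono: "\<epsilon> \<le> \<epsilon>' \<Longrightarrow> lower_bound n p \<epsilon>' \<le> lower_bound n p \<epsilon>"
proof -
  assume "\<epsilon> \<le> \<epsilon>'"
  moreover have "0 \<le> log (1 / (1 - p)) (real n * p)"
    using ln_inverse_one_minus_p_pos ln_p_ge_neg_quarter ln_n_ge
    unfolding log_def ln_np_eq by (intro divide_nonneg_pos) auto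
  ultimately show ?thesis unfolding lower_bound_def by (intro mult_right_mono) auto
qed

end

lemma le_Max_prob_gnp_threshold:
  fixes P :: "nat \<Rightarrow> nat set set \<Rightarrow> bool"
  assumes "0 < k" "1 / 2 < prob_gnp n p (P k)" and size: "\<And>k E. P k E \<Longrightarrow> k \<le> n"
  shows "k \<le> Max ({k. 0 < k \<and> 1 / 2 < prob_gnp n p (P k)} \<union> {0})"
proof (rule Max_ge)
  have "k' \<le> n" if "1 / 2 < prob_gnp n p (P k')" for k'
    using that size prob_gnp_impossible[of "P k'" n p] by force
  then have "{k. 0 < k \<and> 1 / 2 < prob_gnp n p (P k)} \<union> {0} \<subseteq> {..n}" by auto
  then show "finite ({k. 0 < k \<and> 1 / 2 < prob_gnp n p (P k)} \<union> {0})"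
    by (rule finite_subset) simp
  show "k \<in> {k. 0 < k \<and> 1 / 2 < prob_gnp n p (P k)} \<union> {0}" using assms(1,2) by simp
qed

lemma card_le_if_subset_lessThan: "W \<subseteq> {..<n} \<Longrightarrow> card W = k \<Longrightarrow> k \<le> n"
  using card_mono[of "{..<n}" W] by simp

lemma prob_fan_copy_gt_half:
  assumes p: "0 < p" "p < 1" and k: "3 \<le> k" "k < n" and small: "overlap_sum n k p < 1"
  shows "1 / 2 < prob_gnp n p (\<lambda>E. \<exists>W \<subseteq> {..<n}. card W = k \<and> is_diameter_graph_R2 W E
      \<and> chromatic_number W E = 3 \<and> connected_induced W E)"
proof -
  have "1 / 2 < 1 / (1 + overlap_sum n k p)"
    using small overlap_sum_nonneg[of p k n] p k by (simp add: field_simps)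
  also have "\<dots> \<le> prob_gnp n p (\<lambda>E. \<exists>\<phi>\<in>embeddings n k. induces_fan k \<phi> E)"
    using prob_induces_some_fan_ge p k by blast
  also have "\<dots> \<le> prob_gnp n p (\<lambda>E. \<exists>W \<subseteq> {..<n}. card W = k \<and> is_diameter_graph_R2 W E
      \<and> chromatic_number W E = 3 \<and> connected_induced W E)"
  proof (rule prob_gnp_mono)
    fix E assume "E \<subseteq> all_pairs n" "\<exists>\<phi>\<in>embeddings n k. induces_fan k \<phi> E"
    then obtain \<phi> where \<phi>: "\<phi> \<in> embeddings n k" "fan_copy k \<phi> E"
      using induces_fan_imp_fan_copy by blast
    have "\<phi> ` {..<k} \<subseteq> {..<n}" "card (\<phi> ` {..<k}) = k"
      using embedding_range[OF \<phi>(1)] card_image[OF embedding_inj[OF \<phi>(1)]] by auto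
    with diameter_graph_fan_copy[OF k(1) \<phi>(2)] chromatic_number_fan_copy[OF k(1) \<phi>(2)]
      connected_fan_copy[OF k(1) \<phi>(2)]
    show "\<exists>W \<subseteq> {..<n}. card W = k \<and> is_diameter_graph_R2 W E
        \<and> chromatic_number W E = 3 \<and> connected_induced W E"
      by (intro exI[of _ "\<phi> ` {..<k}"]) simp
  qed (use p in simp_all)
  finally show ?thesis .
qed

lemma u2_ge_lower_bound:
  assumes eps: "0 < \<epsilon>0" "\<epsilon>0 \<le> 1 / 2" "\<epsilon>0 \<le> \<epsilon>"
    and dense: "4 \<le> p * root 4 (real n) / ln (real n)"
    and sparse: "1 \<le> (1 - p) * ln (real n)"
    and large: "32 / \<epsilon>0 \<le> sqrt (ln (real n))"
  shows "lower_bound n p \<epsilon> \<le> real (u2 n p) \<and> lower_bound n p \<epsilon> \<le> real (u2' n p)"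
proof -
  note facts = eps(1,2) dense sparse large
  define k where "k = fan_size n p \<epsilon>0"
  have k: "3 \<le> k" "k < n"
    using fan_size_ge_3[OF facts] fan_size_le_half[OF facts] unfolding k_def by linarith+
  have p: "0 < p" "p < 1" using p_pos[OF facts] p_less_1[OF facts] by auto
  have connected: "1 / 2 < prob_gnp n p (\<lambda>E. \<exists>W \<subseteq> {..<n}. card W = k
      \<and> is_diameter_graph_R2 W E \<and> chromatic_number W E = 3 \<and> connected_induced W E)"
    using prob_fan_copy_gt_half[OF p k] overlap_sum_fan_size_less_1[OF facts]
    unfolding k_def by blast
  also have "\<dots> \<le> prob_gnp n p (\<lambda>E. \<exists>W \<subseteq> {..<n}. card W = k
      \<and> is_diameter_graph_R2 W E \<and> chromatic_number W E = 3)"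
    using p by (intro prob_gnp_mono) auto
  finally have "k \<le> u2 n p"
    unfolding u2_def using k card_le_if_subset_lessThan by (intro le_Max_prob_gnp_threshold) auto
  moreover have "k \<le> u2' n p"
    unfolding u2'_def using connected k card_le_if_subset_lessThan
    by (intro le_Max_prob_gnp_threshold) auto
  moreover have "lower_bound n p \<epsilon> \<le> real k"
    using lower_bound_antimono[OF facts eps(3)] lower_bound_le_fan_size[OF facts] unfolding k_def
    by linarith
  ultimately show ?thesis by simp
qed

lemma eventually_sqrt_ln_ge: "eventually (\<lambda>n. c \<le> sqrt (ln (real n))) sequentially"
proof -
  have "eventually (\<lambda>n. exp (c\<^sup>2) \<le> real n) sequentially"
    using filterlim_real_sequentially unfolding filterlim_at_top by blast
  then show ?thesis
  proof (rule eventually_mono)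
    fix n assume "exp (c\<^sup>2) \<le> real n"
    then have "c\<^sup>2 \<le> ln (real n)"
      by (metis exp_gt_zero ln_exp ln_le_cancel_iff order_less_le_trans)
    then show "c \<le> sqrt (ln (real n))" by (simp add: real_le_rsqrt)
  qed
qed

theorem theorem17:
  fixes p :: "nat \<Rightarrow> real"
  assumes prob: "\<And>n. 0 \<le> p n \<and> p n \<le> 1"
    and lim1: "filterlim (\<lambda>n. p n * root 4 (real n) / ln (real n)) at_top sequentially"
    and lim2: "filterlim (\<lambda>n. (1 - p n) * ln (real n)) at_top sequentially"
  shows "\<forall>\<epsilon>>0. \<exists>n0. \<forall>n\<ge>n0.
     let b = (2 - \<epsilon> + 4 * ln (p n) / ln (real n * p n)) * log (1 / (1 - p n)) (real n * p n)
     in real (u2 n (p n)) \<ge> b \<and> real (u2' n (p n)) \<ge> b"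
proof (intro allI impI)
  fix \<epsilon> :: real assume "0 < \<epsilon>"
  define \<epsilon>0 where "\<epsilon>0 = min \<epsilon> (1 / 2)"
  have eps: "0 < \<epsilon>0" "\<epsilon>0 \<le> 1 / 2" "\<epsilon>0 \<le> \<epsilon>" using \<open>0 < \<epsilon>\<close> unfolding \<epsilon>0_def by auto
  have "eventually (\<lambda>n. 32 / \<epsilon>0 \<le> sqrt (ln (real n))) sequentially"
    by (rule eventually_sqrt_ln_ge)
  moreover have "eventually (\<lambda>n. 4 \<le> p n * root 4 (real n) / ln (real n)) sequentially"
    using lim1 unfolding filterlim_at_top by blast
  moreover have "eventually (\<lambda>n. 1 \<le> (1 - p n) * ln (real n)) sequentially"
    using lim2 unfolding filterlim_at_top by blast
  ultimately have "eventually (\<lambda>n. lower_bound n (p n) \<epsilon> \<le> real (u2 n (p n))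
      \<and> lower_bound n (p n) \<epsilon> \<le> real (u2' n (p n))) sequentially"
    by eventually_elim (rule u2_ge_lower_bound[OF eps])
  then show "\<exists>n0. \<forall>n\<ge>n0.
     let b = (2 - \<epsilon> + 4 * ln (p n) / ln (real n * p n)) * log (1 / (1 - p n)) (real n * p n)
     in real (u2 n (p n)) \<ge> b \<and> real (u2' n (p n)) \<ge> b"
    unfolding eventually_sequentially Let_def lower_bound_def .
qed

end
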